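(* Let $\mathbf u$ be an infinite word over a finite alphabet whose language is closed under reversal. The following are equivalent: (1) the defect $D(\mathbf u)$ is finite; (2) there exists an integer $H$ such that for every prefix $w$ of $\mathbf u$ with $|w|\ge H$, the longest palindromic suffix of $w$ occurs in $w$ exactly once.
   Context: For a finite word $w=w_0\cdots w_{n-1}$ its reversal is $\overline{w}=w_{n-1}\cdots w_0$; $w$ is a palindrome if $w=\overline{w}$ (the empty word is a palindrome). The language of $\mathbf u$ is closed under reversal if every factor's reversal is also a factor. The defect of a finite word $w$ is $D(w)=|w|+1-(\text{number of distinct palindromic factors of } w, \text{ including the empty word})$. The defect of an infinite word is $D(\mathbf u)=\sup\{D(w): w \text{ a prefix of } \mathbf u\}$ (possibly $+\infty$). *)

theory Defs
  imports Main "HOL-Library.Sublist" "HOL-Library.Extended_Nat"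
begin

definition palindrome :: "'a list \<Rightarrow> bool" where
  "palindrome w \<longleftrightarrow> rev w = w"

definition factor_of :: "'a list \<Rightarrow> (nat \<Rightarrow> 'a) \<Rightarrow> bool" where
  "factor_of w u \<longleftrightarrow> (\<exists>i. w = map u [i..<i + length w])"

definition closed_under_reversal :: "(nat \<Rightarrow> 'a) \<Rightarrow> bool" where
  "closed_under_reversal u \<longleftrightarrow> (\<forall>w. factor_of w u \<longrightarrow> factor_of (rev w) u)"

definition pref :: "(nat \<Rightarrow> 'a) \<Rightarrow> nat \<Rightarrow> 'a list" where
  "pref u n = map u [0..<n]"

text \<open>Palindromic factors of a finite word (contiguous factors, including the empty word).\<close>
definition pal_factors :: "'a list \<Rightarrow> 'a list set" where
  "pal_factors w = {p. sublist p w \<and> palindrome p}"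

definition defect :: "'a list \<Rightarrow> nat" where
  "defect w = length w + 1 - card (pal_factors w)"

definition defect_inf :: "(nat \<Rightarrow> 'a) \<Rightarrow> enat" where
  "defect_inf u = (SUP n. enat (defect (pref u n)))"

definition lps :: "'a list \<Rightarrow> 'a list" where
  "lps w = drop (LEAST k. palindrome (drop k w)) w"

definition occ :: "'a list \<Rightarrow> 'a list \<Rightarrow> nat" where
  "occ p w = card {i. i + length p \<le> length w \<and> take (length p) (drop i w) = p}"

end

theory Submission
  imports Defs
begin

text \<open>Appending a letter to a finite word creates at most one new palindromic factor, namely
  the longest palindromic suffix: any shorter palindromic suffix is also a prefix of that
  palindrome, hence already occurs earlier. So the new word gains a palindrome exactly when its
  longest palindromic suffix is unioccurrent, and otherwise its defect grows by one. The defects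
  of the prefixes of \<open>u\<close> thus form a non-decreasing sequence with unit jumps precisely at the
  prefixes whose longest palindromic suffix is not unioccurrent; such a sequence is bounded iff
  the jumps eventually stop.\<close>

lemma finite_pal_factors: "finite (pal_factors w)"
  by (rule finite_subset[of _ "set (sublists w)"]) (auto simp: pal_factors_def)

lemma pal_factors_Nil: "pal_factors [] = {[]}"
  by (auto simp: pal_factors_def palindrome_def)

lemma palindrome_lps: "palindrome (lps w)"
  unfolding lps_def by (rule LeastI[of _ "length w"]) (simp add: palindrome_def)

lemma suffix_lps: "suffix (lps w) w"
  unfolding lps_def by (rule suffix_drop)

lemma length_le_lps:
  assumes "suffix s w" "palindrome s"
  shows "length s \<le> length (lps w)"
proof -
  obtain x where w: "w = x @ s" using assms(1) by (auto simp: suffix_def)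
  have "(LEAST k. palindrome (drop k w)) \<le> length x"
    using assms(2) w by (intro Least_le) simp
  then show ?thesis unfolding lps_def using w by simp
qed

lemma sublist_if_palindromic_suffix_neq_lps:
  assumes "suffix s (w @ [a])" "palindrome s" "s \<noteq> lps (w @ [a])"
  shows "sublist s w"
proof -
  let ?p = "lps (w @ [a])"
  have "suffix s ?p"
    using suffix_length_suffix[OF assms(1) suffix_lps] length_le_lps[OF assms(1,2)] .
  then obtain t where pt: "?p = t @ s" by (auto simp: suffix_def)
  with assms(3) have "rev t \<noteq> []" by auto
  then obtain t' b where t': "rev t = t' @ [b]" by (metis rev_exhaust)
  \<comment> \<open>reversing the palindrome \<open>t @ s\<close> exhibits \<open>s\<close> as a proper prefix of it\<close>
  have "?p = s @ rev t"
    using pt palindrome_lps[of "w @ [a]"] assms(2) by (metis palindrome_def rev_append)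
  moreover obtain x where "w @ [a] = x @ ?p" using suffix_lps by (metis suffix_def)
  ultimately have "w = x @ s @ t'" using t' by simp
  then show ?thesis unfolding sublist_def by blast
qed

lemma pal_factors_snoc:
  "pal_factors (w @ [a]) = insert (lps (w @ [a])) (pal_factors w)"
proof (intro set_eqI iffI)
  fix q assume "q \<in> pal_factors (w @ [a])"
  then have "suffix q (w @ [a]) \<or> sublist q w" and "palindrome q"
    by (auto simp: pal_factors_def sublist_snoc)
  then have "q = lps (w @ [a]) \<or> sublist q w"
    using sublist_if_palindromic_suffix_neq_lps[of q w a] by blast
  then show "q \<in> insert (lps (w @ [a])) (pal_factors w)"
    using \<open>palindrome q\<close> by (auto simp: pal_factors_def)
next
  fix q assume "q \<in> insert (lps (w @ [a])) (pal_factors w)"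
  then show "q \<in> pal_factors (w @ [a])"
    using palindrome_lps[of "w @ [a]"] suffix_imp_sublist[OF suffix_lps[of "w @ [a]"]]
    by (auto simp: pal_factors_def sublist_snoc)
qed

lemma card_pal_factors_le: "card (pal_factors w) \<le> length w + 1"
  by (induction w rule: rev_induct)
    (auto simp: pal_factors_Nil pal_factors_snoc card_insert_if finite_pal_factors)

lemma occ_pos_iff_sublist: "0 < occ p w \<longleftrightarrow> sublist p w"
proof -
  have "finite {i. i + length p \<le> length w \<and> take (length p) (drop i w) = p}"
    by (rule finite_subset[of _ "{..length w}"]) auto
  then have "0 < occ p w \<longleftrightarrow> (\<exists>i. i + length p \<le> length w \<and> take (length p) (drop i w) = p)"
    unfolding occ_def by (simp add: card_gt_0_iff)
  also have "\<dots> \<longleftrightarrow> sublist p w"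
  proof
    assume "\<exists>i. i + length p \<le> length w \<and> take (length p) (drop i w) = p"
    then obtain i where "take (length p) (drop i w) = p" by blast
    then have "w = take i w @ p @ drop (length p) (drop i w)"
      by (metis append_take_drop_id)
    then show "sublist p w" unfolding sublist_def by blast
  next
    assume "sublist p w"
    then obtain ps ss where "w = ps @ p @ ss" by (auto simp: sublist_def)
    then show "\<exists>i. i + length p \<le> length w \<and> take (length p) (drop i w) = p"
      by (intro exI[of _ "length ps"]) simp
  qed
  finally show ?thesis .
qed

lemma occ_snoc_if_suffix:
  assumes "suffix p (w @ [a])"
  shows "occ p (w @ [a]) = Suc (occ p w)"
proof -
  let ?S = "{i. i + length p \<le> length w \<and> take (length p) (drop i w) = p}"
  let ?j = "Suc (length w) - length p"
  obtain x where wx: "w @ [a] = x @ p" using assms by (auto simp: suffix_def)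
  then have j: "?j = length x" and lp: "length p \<le> Suc (length w)"
    by (metis diff_add_inverse2 length_append length_append_singleton, metis le_add2 length_append
        length_append_singleton)
  have "{i. i + length p \<le> length (w @ [a]) \<and> take (length p) (drop i (w @ [a])) = p}
      = insert ?j ?S"
  proof (intro set_eqI iffI)
    fix i
    assume i: "i \<in> {i. i + length p \<le> length (w @ [a]) \<and> take (length p) (drop i (w @ [a])) = p}"
    show "i \<in> insert ?j ?S"
    proof (cases "i + length p \<le> length w")
      case True
      then show ?thesis using i by simp
    next
      case False
      then have "i + length p = Suc (length w)" using i by simp
      then show ?thesis by simp
    qed
  next
    fix i assume "i \<in> insert ?j ?S"
    then show "i \<in> {i. i + length p \<le> length (w @ [a]) \<and> take (length p) (drop i (w @ [a])) = p}"
    proof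
      assume "i = ?j"
      then show ?thesis using j wx lp by (simp del: append_assoc)
    qed simp
  qed
  moreover have "?j \<notin> ?S" using lp by simp
  moreover have "finite ?S" by (rule finite_subset[of _ "{..length w}"]) auto
  ultimately show ?thesis unfolding occ_def by simp
qed

lemma occ_lps_snoc_eq_1_iff:
  "occ (lps (w @ [a])) (w @ [a]) = 1 \<longleftrightarrow> \<not> sublist (lps (w @ [a])) w"
  using occ_pos_iff_sublist[of "lps (w @ [a])" w] occ_snoc_if_suffix[OF suffix_lps[of "w @ [a]"]]
  by auto

lemma defect_snoc:
  "defect (w @ [a]) = defect w + (if occ (lps (w @ [a])) (w @ [a]) = 1 then 0 else 1)"
proof -
  have "lps (w @ [a]) \<in> pal_factors w \<longleftrightarrow> occ (lps (w @ [a])) (w @ [a]) \<noteq> 1"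
    using occ_lps_snoc_eq_1_iff[of w a] palindrome_lps by (auto simp: pal_factors_def)
  then show ?thesis
    using card_pal_factors_le[of w] unfolding defect_def pal_factors_snoc
    by (simp add: card_insert_if finite_pal_factors)
qed

lemma bounded_iff_eventually_no_increment:
  fixes f :: "nat \<Rightarrow> nat"
  assumes f_Suc: "\<And>n. f (Suc n) = f n + (if P (Suc n) then 0 else 1)"
  shows "(\<exists>B. \<forall>n. f n \<le> B) \<longleftrightarrow> (\<exists>H. \<forall>n\<ge>H. P n)"
proof
  have mono: "incseq f" by (rule incseq_SucI) (simp add: f_Suc)
  assume "\<exists>B. \<forall>n. f n \<le> B"
  then obtain B where B: "\<And>n. f n \<le> B" by blast
  show "\<exists>H. \<forall>n\<ge>H. P n"
  proof (rule ccontr)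
    assume "\<not> (\<exists>H. \<forall>n\<ge>H. P n)"
    then have jumps: "\<And>H. \<exists>n. H < n \<and> \<not> P n" by (meson Suc_le_lessD)
    have "\<exists>n. m \<le> f n" for m
    proof (induction m)
      case (Suc m)
      then obtain k where k: "m \<le> f k" by blast
      obtain n where "k < n" "\<not> P n" using jumps by blast
      then obtain n' where "n = Suc n'" "k \<le> n'" by (cases n) auto
      with \<open>\<not> P n\<close> have "f n = f n' + 1" using f_Suc by simp
      moreover have "f k \<le> f n'" using mono \<open>k \<le> n'\<close> by (simp add: incseq_def)
      ultimately show ?case using k by (intro exI[of _ n]) simp
    qed simp
    then show False using B by (meson not_less_eq_eq)
  qed
next
  assume "\<exists>H. \<forall>n\<ge>H. P n"
  then obtain H where H: "\<And>n. H \<le> n \<Longrightarrow> P n" by blast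
  have "f n \<le> f H" for n
  proof (cases "H \<le> n")
    case True
    then show ?thesis
      by (induction n rule: dec_induct) (simp_all add: f_Suc H)
  next
    case False
    then show ?thesis using incseq_SucI[of f] f_Suc by (simp add: incseq_def)
  qed
  then show "\<exists>B. \<forall>n. f n \<le> B" by blast
qed

lemma SUP_enat_neq_infinity_iff:
  "(SUP n. enat (f n)) \<noteq> \<infinity> \<longleftrightarrow> (\<exists>B. \<forall>n. f n \<le> B)"
proof
  assume "(SUP n. enat (f n)) \<noteq> \<infinity>"
  then obtain B where "(SUP n. enat (f n)) = enat B" by auto
  then have "enat (f n) \<le> enat B" for n by (metis SUP_upper UNIV_I)
  then show "\<exists>B. \<forall>n. f n \<le> B" by auto
next
  assume "\<exists>B. \<forall>n. f n \<le> B"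
  then obtain B where "\<And>n. f n \<le> B" by blast
  then have "(SUP n. enat (f n)) \<le> enat B" by (intro SUP_least) simp
  then show "(SUP n. enat (f n)) \<noteq> \<infinity>" by (metis infinity_ileE)
qed

theorem corollary3:
  fixes u :: "nat \<Rightarrow> 'a::finite"
  assumes "closed_under_reversal u"
  shows "defect_inf u \<noteq> \<infinity> \<longleftrightarrow>
         (\<exists>H::nat. \<forall>n\<ge>H. occ (lps (pref u n)) (pref u n) = 1)"
proof -
  have "pref u (Suc n) = pref u n @ [u n]" for n by (simp add: pref_def)
  then have "defect (pref u (Suc n)) = defect (pref u n) +
      (if occ (lps (pref u (Suc n))) (pref u (Suc n)) = 1 then 0 else 1)" for n
    by (simp only: defect_snoc)
  then show ?thesis
    unfolding defect_inf_def SUP_enat_neq_infinity_iff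
    by (rule bounded_iff_eventually_no_increment)
qed

end
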